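(* Let $m\ge 1$ and $l\ge 0$ be integers and put $k=2^m l+2^{m-1}$. Then $$c(k)=c(2^m l)\,F(m-1),$$ where $F(m-1)=2^{2^{m-1}}+1$.
   Context: For $n\ge 0$, $c(n)=\sum_{i=0}^{n}\left(\binom{n}{i}\bmod 2\right)2^{i}$, the integer whose binary digits form the $n$-th row of Pascal's triangle modulo $2$. $F(j)=2^{2^j}+1$ is the $j$-th Fermat number. *)

theory Defs
  imports Main
begin

definition c :: "nat \<Rightarrow> nat" where
  "c n = (\<Sum>i=0..n. ((n choose i) mod 2) * 2 ^ i)"

definition F :: "nat \<Rightarrow> nat" where
  "F j = 2 ^ (2 ^ j) + 1"

end

theory Submission
  imports Defs
begin

text \<open>Let \<open>P\<^sub>n(X)\<close> be \<open>(1 + X)\<^sup>n\<close> reduced modulo 2, so that \<open>c n = P\<^sub>n(2)\<close>. The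
  Frobenius identity \<open>(1 + X)\<^sup>2 = 1 + X\<^sup>2\<close> modulo 2 gives \<open>P\<^sub>2\<^sub>n(X) = P\<^sub>n(X\<^sup>2)\<close> and
  \<open>P\<^sub>2\<^sub>n\<^sub>+\<^sub>1(X) = P\<^sub>n(X\<^sup>2) (1 + X)\<close>. Iterating, \<open>P\<^bsub>2\<^sup>j a + b\<^esub> = P\<^bsub>2\<^sup>j a\<^esub> P\<^sub>b\<close>
  whenever \<open>b < 2\<^sup>j\<close>, and \<open>P\<^bsub>2\<^sup>j\<^esub>(X) = 1 + X\<^bsup>2\<^sup>j\<^esup>\<close>. Take \<open>j = m - 1\<close>,
  \<open>a = 2 l\<close>, \<open>b = 2\<^bsup>m-1\<^esup>\<close> and evaluate at \<open>X = 2\<close>.\<close>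

lemma odd_choose_double:
  "odd (2 * n choose 2 * k) \<longleftrightarrow> odd (n choose k)"
  "even (2 * n choose Suc (2 * k))"
proof (induction n arbitrary: k)
  case 0
  show "odd (2 * 0 choose 2 * k) \<longleftrightarrow> odd (0 choose k)" for k by (cases k) auto
  show "even (2 * 0 choose Suc (2 * k))" for k by simp
next
  case (Suc n)
  have double_Suc: "2 * Suc n = Suc (Suc (2 * n))" by simp
  show "odd (2 * Suc n choose 2 * k) \<longleftrightarrow> odd (Suc n choose k)" for k
  proof (cases k)
    case (Suc k')
    have "(2 * Suc n choose 2 * k) =
        (2 * n choose 2 * k') + 2 * (2 * n choose Suc (2 * k')) + (2 * n choose 2 * Suc k')"
      using Suc by (simp add: double_Suc)
    then show ?thesis
      using Suc Suc.IH(1)[of k'] Suc.IH(1)[of "Suc k'"] Suc.IH(2)[of k'] by simp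
  qed simp
  show "even (2 * Suc n choose Suc (2 * k))" for k
  proof (cases k)
    case (Suc k')
    have "(2 * Suc n choose Suc (2 * k)) =
        (2 * n choose Suc (2 * k')) + 2 * (2 * n choose 2 * Suc k') + (2 * n choose Suc (2 * Suc k'))"
      using Suc by (simp add: double_Suc)
    then show ?thesis
      using Suc.IH(2)[of k'] Suc.IH(2)[of "Suc k'"] by simp
  qed simp
qed

lemma odd_choose_Suc_double:
  "odd (Suc (2 * n) choose 2 * k) \<longleftrightarrow> odd (n choose k)"
  "odd (Suc (2 * n) choose Suc (2 * k)) \<longleftrightarrow> odd (n choose k)"
proof -
  show "odd (Suc (2 * n) choose Suc (2 * k)) \<longleftrightarrow> odd (n choose k)"
    using odd_choose_double[of n k] by simp
  show "odd (Suc (2 * n) choose 2 * k) \<longleftrightarrow> odd (n choose k)"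
  proof (cases k)
    case (Suc k')
    then have "(Suc (2 * n) choose 2 * k) = (2 * n choose Suc (2 * k')) + (2 * n choose 2 * k)"
      by simp
    then show ?thesis
      using odd_choose_double(1)[of n k] odd_choose_double(2)[of n k'] by simp
  qed simp
qed

lemma sum_lessThan_double:
  fixes f :: "nat \<Rightarrow> 'a::comm_monoid_add"
  shows "(\<Sum>i<2 * n. f i) = (\<Sum>k<n. f (2 * k)) + (\<Sum>k<n. f (Suc (2 * k)))"
  by (induction n) (simp_all add: ac_simps)

definition pascal_parity_row :: "'a::comm_semiring_1 \<Rightarrow> nat \<Rightarrow> 'a" where
  "pascal_parity_row x n = (\<Sum>i\<le>n. of_bool (odd (n choose i)) * x ^ i)"

lemma c_eq_pascal_parity_row: "c n = pascal_parity_row 2 n"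
  unfolding c_def pascal_parity_row_def
  by (simp add: atLeast0AtMost of_bool_odd_eq_mod_2)

lemma pascal_parity_row_eq_sum_lessThan:
  assumes "n < N"
  shows "(\<Sum>i<N. of_bool (odd (n choose i)) * x ^ i) = pascal_parity_row x n"
  unfolding pascal_parity_row_def using assms
  by (intro sum.mono_neutral_right) (auto simp: binomial_eq_0)

lemma pascal_parity_row_double:
  "pascal_parity_row x (2 * n) = pascal_parity_row (x\<^sup>2) n"
proof -
  have "pascal_parity_row x (2 * n) =
      (\<Sum>i<2 * Suc n. of_bool (odd (2 * n choose i)) * x ^ i)"
    by (rule pascal_parity_row_eq_sum_lessThan [symmetric]) simp
  also have "\<dots> = (\<Sum>k<Suc n. of_bool (odd (n choose k)) * (x\<^sup>2) ^ k)"
    unfolding sum_lessThan_double by (simp add: odd_choose_double power_mult)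
  also have "\<dots> = pascal_parity_row (x\<^sup>2) n"
    by (rule pascal_parity_row_eq_sum_lessThan) simp
  finally show ?thesis .
qed

lemma pascal_parity_row_Suc_double:
  "pascal_parity_row x (Suc (2 * n)) = pascal_parity_row (x\<^sup>2) n * (1 + x)"
proof -
  have "pascal_parity_row x (Suc (2 * n)) =
      (\<Sum>i<2 * Suc n. of_bool (odd (Suc (2 * n) choose i)) * x ^ i)"
    by (rule pascal_parity_row_eq_sum_lessThan [symmetric]) simp
  also have "\<dots> = (\<Sum>k<Suc n. of_bool (odd (n choose k)) * (x\<^sup>2) ^ k)
      + (\<Sum>k<Suc n. of_bool (odd (n choose k)) * (x\<^sup>2) ^ k) * x"
    unfolding sum_lessThan_double sum_distrib_right
    by (intro arg_cong2 [where f = "(+)"] sum.cong)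
      (simp_all add: odd_choose_Suc_double power_mult power_Suc2 mult.assoc
        del: binomial_Suc_Suc power_Suc)
  also have "\<dots> = (\<Sum>k<Suc n. of_bool (odd (n choose k)) * (x\<^sup>2) ^ k) * (1 + x)"
    by (simp add: algebra_simps)
  also have "\<dots> = pascal_parity_row (x\<^sup>2) n * (1 + x)"
    by (subst pascal_parity_row_eq_sum_lessThan) simp_all
  finally show ?thesis .
qed

lemma pascal_parity_row_power_of_two:
  "pascal_parity_row x (2 ^ j) = 1 + x ^ 2 ^ j"
proof (induction j arbitrary: x)
  case 0
  show ?case by (simp add: pascal_parity_row_def)
next
  case (Suc j)
  have "pascal_parity_row x (2 ^ Suc j) = pascal_parity_row (x\<^sup>2) (2 ^ j)"
    using pascal_parity_row_double[of x "2 ^ j"] by simp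
  with Suc.IH show ?case
    by (simp add: power_mult [symmetric] mult.commute)
qed

lemma pascal_parity_row_add_low:
  assumes "b < 2 ^ j"
  shows "pascal_parity_row x (2 ^ j * a + b) =
    pascal_parity_row x (2 ^ j * a) * pascal_parity_row x b"
  using assms
proof (induction j arbitrary: x b)
  case 0
  then show ?case by (simp add: pascal_parity_row_def)
next
  case (Suc j)
  define b' where "b' = b div 2"
  have b'_less: "b' < 2 ^ j"
    using Suc.prems by (simp add: b'_def less_mult_imp_div_less)
  have high_part: "2 ^ Suc j * a = 2 * (2 ^ j * a)" by simp
  show ?case
  proof (cases "even b")
    case True
    then have "b = 2 * b'" and "2 ^ Suc j * a + b = 2 * (2 ^ j * a + b')"
      by (simp_all add: b'_def)
    then show ?thesis
      unfolding high_part by (simp only: pascal_parity_row_double Suc.IH [OF b'_less])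
  next
    case False
    then have "b = Suc (2 * b')" and "2 ^ Suc j * a + b = Suc (2 * (2 ^ j * a + b'))"
      by (simp_all add: b'_def odd_two_times_div_two_succ)
    then show ?thesis
      unfolding high_part
      by (simp only: pascal_parity_row_double pascal_parity_row_Suc_double Suc.IH [OF b'_less]
          mult.assoc)
  qed
qed

theorem corollary4:
  fixes m l k :: nat
  assumes "m \<ge> 1"
    and "k = 2 ^ m * l + 2 ^ (m - 1)"
  shows "c k = c (2 ^ m * l) * F (m - 1)"
proof -
  have "2 ^ m * l = 2 ^ (m - 1) * (2 * l)"
    using assms(1) by (simp add: power_eq_if)
  moreover have "(2::nat) ^ (m - 1) < 2 ^ m"
    using assms(1) by simp
  ultimately show ?thesis
    unfolding assms(2) c_eq_pascal_parity_row F_def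
    by (simp add: pascal_parity_row_add_low pascal_parity_row_power_of_two)
qed

end
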